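(* Let $f_1,f_2,f_3$ be smooth nowhere-vanishing functions on $\mathbb R^3$ and $g=\frac{1}{f_1^2}dx^1\otimes dx^1+\frac{1}{f_2^2}dx^2\otimes dx^2+\frac{1}{f_3^2}dx^3\otimes dx^3$, with $E_i=f_i\frac{\partial}{\partial x^i}$. (i) $E_2$ is a Killing vector field of $(\mathbb R^3,g)$ if and only if $f_2$ depends only on $x^2$ and $f_1,f_3$ depend only on $(x^1,x^3)$. (ii) $E_3$ is a Killing vector field of $(\mathbb R^3,g)$ if and only if $f_3$ depends only on $x^3$ and $f_1,f_2$ depend only on $(x^1,x^2)$.
   Context: $x^1,x^2,x^3$ are the standard coordinates on $\mathbb R^3$. A vector field $V$ is Killing if $\mathcal L_Vg=0$. *)

theory Defs
  imports "HOL-Analysis.Analysis"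
begin

text \<open>Points of R^3 are vectors of type real^3; the coordinate x^i of x is x $ i,
  with i :: 3 ranging over 1, 2, 3.\<close>

definition pd :: "3 \<Rightarrow> (real^3 \<Rightarrow> real) \<Rightarrow> real^3 \<Rightarrow> real" where
  "pd i f x = deriv (\<lambda>t. f (x + t *\<^sub>R axis i 1)) 0"

fun iter_pd :: "3 list \<Rightarrow> (real^3 \<Rightarrow> real) \<Rightarrow> real^3 \<Rightarrow> real" where
  "iter_pd [] f = f"
| "iter_pd (i # is) f = pd i (iter_pd is f)"

definition smooth3 :: "(real^3 \<Rightarrow> real) \<Rightarrow> bool" where
  "smooth3 f \<longleftrightarrow> (\<forall>is x. iter_pd is f differentiable (at x))"

text \<open>A (0,2)-tensor field in coordinates: components g i j; a vector field V = V^k d/dx^k.\<close>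
type_synonym metric3 = "3 \<Rightarrow> 3 \<Rightarrow> real^3 \<Rightarrow> real"
type_synonym vfield3 = "3 \<Rightarrow> real^3 \<Rightarrow> real"

definition lie_deriv_metric :: "vfield3 \<Rightarrow> metric3 \<Rightarrow> metric3" where
  "lie_deriv_metric V g i j x =
     (\<Sum>k\<in>UNIV. V k x * pd k (g i j) x + g k j x * pd i (V k) x + g i k x * pd j (V k) x)"

definition killing :: "metric3 \<Rightarrow> vfield3 \<Rightarrow> bool" where
  "killing g V \<longleftrightarrow> (\<forall>i j x. lie_deriv_metric V g i j x = 0)"

definition diag_metric :: "(3 \<Rightarrow> real^3 \<Rightarrow> real) \<Rightarrow> metric3" where
  "diag_metric f i j x = (if i = j then 1 / (f i x)^2 else 0)"

definition frame_field :: "(3 \<Rightarrow> real^3 \<Rightarrow> real) \<Rightarrow> 3 \<Rightarrow> vfield3" where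
  "frame_field f i k x = (if k = i then f i x else 0)"

end

theory Submission
  imports Defs
begin

text \<open>The Lie derivative of the diagonal metric along \<open>E\<^sub>m = f\<^sub>m \<partial>\<^sub>m\<close> is again diagonal
  except in row and column \<open>m\<close>. Its diagonal entry \<open>i \<noteq> m\<close> is a nonzero multiple of
  \<open>\<partial>\<^sub>m f\<^sub>i\<close>, its entries \<open>(i, m)\<close> and \<open>(m, i)\<close> are \<open>\<partial>\<^sub>i f\<^sub>m / f\<^sub>m\<^sup>2\<close>, and the entry \<open>(m, m)\<close>
  cancels identically. So \<open>E\<^sub>m\<close> is Killing iff \<open>f\<^sub>m\<close> is constant in the directions
  \<open>i \<noteq> m\<close> and every other \<open>f\<^sub>i\<close> is constant in direction \<open>m\<close>. A differentiable
  function on \<open>\<real>\<^sup>n\<close> with vanishing partial derivatives in some coordinate directions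
  is invariant under translations in these directions, i.e. it depends only on the
  remaining coordinates.\<close>

lemma has_real_derivative_pd:
  assumes "f differentiable (at x)"
  shows "((\<lambda>t. f (x + t *\<^sub>R axis k 1)) has_real_derivative pd k f x) (at 0)"
proof -
  have "(\<lambda>t::real. x + t *\<^sub>R axis k 1) differentiable (at 0)"
    by (intro derivative_intros)
  then have "(f \<circ> (\<lambda>t. x + t *\<^sub>R axis k 1)) differentiable (at 0)"
    using assms by (intro differentiable_chain_at) simp_all
  then show ?thesis
    unfolding pd_def by (simp add: DERIV_deriv_iff_real_differentiable[symmetric] o_def)
qed

lemma pd_const: "pd k (\<lambda>x. c) x = 0"
  unfolding pd_def by simp

lemma pd_inverse_square:
  assumes "f differentiable (at x)" and "f x \<noteq> 0"
  shows "pd k (\<lambda>x. 1 / (f x)\<^sup>2) x = -2 * pd k f x / (f x)^3"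
proof -
  note line_derivative = has_real_derivative_pd[OF assms(1), of k]
  have "((\<lambda>t. 1 / (f (x + t *\<^sub>R axis k 1))\<^sup>2) has_real_derivative
          - (2 * (pd k f x * f x)) / (f x)^4) (at 0)"
    using DERIV_divide[OF DERIV_const[of 1] DERIV_power[OF line_derivative, where n = 2]] assms(2)
    by simp
  then have "pd k (\<lambda>x. 1 / (f x)\<^sup>2) x = - (2 * (pd k f x * f x)) / (f x)^4"
    unfolding pd_def by (rule DERIV_imp_deriv)
  also have "\<dots> = -2 * pd k f x / (f x)^3"
    using assms(2) by (simp add: field_simps power2_eq_square power3_eq_cube power4_eq_xxxx)
  finally show ?thesis .
qed

lemma pd_eq_0_iff_axis_invariant:
  assumes "\<And>y. f differentiable (at y)"
  shows "(\<forall>x. pd k f x = 0) \<longleftrightarrow> (\<forall>x t. f (x + t *\<^sub>R axis k 1) = f x)"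
proof
  assume pd_0: "\<forall>x. pd k f x = 0"
  show "\<forall>x t. f (x + t *\<^sub>R axis k 1) = f x"
  proof (intro allI)
    fix x t
    let ?g = "\<lambda>t. f (x + t *\<^sub>R axis k 1)"
    have "DERIV ?g s :> 0" for s
    proof -
      have "((\<lambda>u. f ((x + s *\<^sub>R axis k 1) + u *\<^sub>R axis k 1)) has_real_derivative 0) (at 0)"
        using has_real_derivative_pd[OF assms, of "x + s *\<^sub>R axis k 1" k] pd_0 by simp
      moreover have "(\<lambda>u. f ((x + s *\<^sub>R axis k 1) + u *\<^sub>R axis k 1)) = (\<lambda>u. ?g (u + s))"
        by (simp add: scaleR_add_left algebra_simps)
      ultimately show ?thesis
        using DERIV_shift[of ?g 0 0 s] by simp
    qed
    then have "?g t = ?g 0"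
      using DERIV_isconst_all by blast
    then show "f (x + t *\<^sub>R axis k 1) = f x"
      by simp
  qed
next
  assume "\<forall>x t. f (x + t *\<^sub>R axis k 1) = f x"
  then show "\<forall>x. pd k f x = 0"
    unfolding pd_def by simp
qed

lemma axis_invariant_imp_eq_restrict:
  fixes f :: "real^'n \<Rightarrow> 'a"
  assumes invariant: "\<And>c x t. c \<notin> S \<Longrightarrow> f (x + t *\<^sub>R axis c 1) = f x"
  shows "f x = f (\<chi> i. if i \<in> S then x $ i else 0)"
proof -
  have "\<forall>x. f x = f (\<chi> i. if i \<in> T then 0 else x $ i)" if "T \<subseteq> - S" for T
    using finite[of T] that
  proof (induction T rule: finite_subset_induct)
    case empty
    then show ?case
      by simp
  next
    case (insert c T)
    show ?case
    proof
      fix x :: "real^'n"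
      let ?y = "\<chi> i. if i \<in> T then 0 else x $ i"
      have shift: "(\<chi> i. if i \<in> insert c T then 0 else x $ i) = ?y + (- x $ c) *\<^sub>R axis c 1"
        using insert.hyps by (auto simp: vec_eq_iff axis_def)
      have "f x = f ?y"
        using insert.IH by blast
      also have "\<dots> = f (?y + (- x $ c) *\<^sub>R axis c 1)"
        using insert.hyps by (intro invariant[symmetric]) auto
      finally show "f x = f (\<chi> i. if i \<in> insert c T then 0 else x $ i)"
        unfolding shift .
    qed
  qed
  then have "f x = f (\<chi> i. if i \<in> - S then 0 else x $ i)"
    by blast
  also have "(\<chi> i. if i \<in> - S then 0 else x $ i) = (\<chi> i. if i \<in> S then x $ i else 0)"
    by (simp add: vec_eq_iff)
  finally show ?thesis .
qed

lemma depends_only_on_coordinate_iff: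
  fixes f :: "real^'n \<Rightarrow> 'a"
  shows "(\<exists>h. \<forall>x. f x = h (x $ c)) \<longleftrightarrow>
         (\<forall>k. k \<noteq> c \<longrightarrow> (\<forall>x t. f (x + t *\<^sub>R axis k 1) = f x))"
proof
  assume "\<exists>h. \<forall>x. f x = h (x $ c)"
  then show "\<forall>k. k \<noteq> c \<longrightarrow> (\<forall>x t. f (x + t *\<^sub>R axis k 1) = f x)"
    by (auto simp: axis_def)
next
  assume "\<forall>k. k \<noteq> c \<longrightarrow> (\<forall>x t. f (x + t *\<^sub>R axis k 1) = f x)"
  then have "f x = f (\<chi> i. if i \<in> {c} then x $ i else 0)" for x
    by (intro axis_invariant_imp_eq_restrict) auto
  moreover have "(\<chi> i. if i \<in> {c} then x $ i else 0) = (\<chi> i. if i = c then x $ c else 0)"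
    for x :: "real^'n"
    by (auto simp: vec_eq_iff)
  ultimately show "\<exists>h. \<forall>x. f x = h (x $ c)"
    by (intro exI[of _ "\<lambda>u. f (\<chi> i. if i = c then u else 0)"]) simp
qed

lemma depends_only_on_two_coordinates_iff:
  fixes f :: "real^'n \<Rightarrow> 'a"
  shows "(\<exists>h. \<forall>x. f x = h (x $ a) (x $ b)) \<longleftrightarrow>
         (\<forall>k. k \<noteq> a \<longrightarrow> k \<noteq> b \<longrightarrow> (\<forall>x t. f (x + t *\<^sub>R axis k 1) = f x))"
proof
  assume "\<exists>h. \<forall>x. f x = h (x $ a) (x $ b)"
  then show "\<forall>k. k \<noteq> a \<longrightarrow> k \<noteq> b \<longrightarrow> (\<forall>x t. f (x + t *\<^sub>R axis k 1) = f x)"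
    by (auto simp: axis_def)
next
  assume "\<forall>k. k \<noteq> a \<longrightarrow> k \<noteq> b \<longrightarrow> (\<forall>x t. f (x + t *\<^sub>R axis k 1) = f x)"
  then have "f x = f (\<chi> i. if i \<in> {a, b} then x $ i else 0)" for x
    by (intro axis_invariant_imp_eq_restrict) auto
  moreover have "(\<chi> i. if i \<in> {a, b} then x $ i else 0) =
                 (\<chi> i. if i = a then x $ a else if i = b then x $ b else 0)" for x :: "real^'n"
    by (auto simp: vec_eq_iff)
  ultimately show "\<exists>h. \<forall>x. f x = h (x $ a) (x $ b)"
    by (intro exI[of _ "\<lambda>u v. f (\<chi> i. if i = a then u else if i = b then v else 0)"]) simp
qed

lemma lie_deriv_diag_metric_frame_field:
  assumes "\<And>i y. f i differentiable (at y)" and "\<And>i y. f i y \<noteq> 0"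
  shows "lie_deriv_metric (frame_field f m) (diag_metric f) i j x =
    (if i = j then -2 * f m x * pd m (f i) x / (f i x)^3 else 0)
    + (if j = m then pd i (f m) x / (f m x)\<^sup>2 else 0)
    + (if i = m then pd j (f m) x / (f m x)\<^sup>2 else 0)"
proof -
  have frame_field_eq: "frame_field f m k = (if k = m then f m else (\<lambda>x. 0))" for k
    by (auto simp: frame_field_def)
  have diag_metric_eq: "diag_metric f i j = (if i = j then (\<lambda>x. 1 / (f i x)\<^sup>2) else (\<lambda>x. 0))"
    by (auto simp: diag_metric_def)
  have "frame_field f m k x * pd k (diag_metric f i j) x
        + diag_metric f k j x * pd i (frame_field f m k) x
        + diag_metric f i k x * pd j (frame_field f m k) x =
        (if k = m then
           (if i = j then -2 * f m x * pd m (f i) x / (f i x)^3 else 0)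
           + (if j = m then pd i (f m) x / (f m x)\<^sup>2 else 0)
           + (if i = m then pd j (f m) x / (f m x)\<^sup>2 else 0)
         else 0)" for k
    using assms
    by (auto simp: frame_field_eq diag_metric_eq diag_metric_def pd_const pd_inverse_square)
  then show ?thesis
    unfolding lie_deriv_metric_def by simp
qed

lemma killing_frame_field_iff:
  assumes "\<And>i y. f i differentiable (at y)" and nonzero: "\<And>i y. f i y \<noteq> 0"
  shows "killing (diag_metric f) (frame_field f m) \<longleftrightarrow>
         (\<forall>i x. i \<noteq> m \<longrightarrow> pd m (f i) x = 0 \<and> pd i (f m) x = 0)"
proof
  assume "killing (diag_metric f) (frame_field f m)"
  then have L: "lie_deriv_metric (frame_field f m) (diag_metric f) i j x = 0" for i j x
    unfolding killing_def by blast
  show "\<forall>i x. i \<noteq> m \<longrightarrow> pd m (f i) x = 0 \<and> pd i (f m) x = 0"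
  proof (intro allI impI conjI)
    fix i x
    assume "i \<noteq> m"
    then show "pd m (f i) x = 0"
      using L[of i i x] nonzero[of i x] nonzero[of m x]
      by (simp add: lie_deriv_diag_metric_frame_field[OF assms])
    show "pd i (f m) x = 0"
      using \<open>i \<noteq> m\<close> L[of i m x] nonzero[of m x]
      by (simp add: lie_deriv_diag_metric_frame_field[OF assms])
  qed
next
  assume "\<forall>i x. i \<noteq> m \<longrightarrow> pd m (f i) x = 0 \<and> pd i (f m) x = 0"
  moreover have "-2 * f m x * p / (f m x)^3 + p / (f m x)\<^sup>2 + p / (f m x)\<^sup>2 = 0" for x p
    using nonzero[of m x] by (simp add: field_simps power2_eq_square power3_eq_cube)
  ultimately show "killing (diag_metric f) (frame_field f m)"
    unfolding killing_def lie_deriv_diag_metric_frame_field[OF assms] by auto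
qed

lemma killing_frame_field_iff_coordinate_dependence:
  assumes differentiable: "\<And>i y. f i differentiable (at y)" and "\<And>i y. f i y \<noteq> 0"
    and distinct: "a \<noteq> b" "a \<noteq> m" "b \<noteq> m"
  shows "killing (diag_metric f) (frame_field f m) \<longleftrightarrow>
           (\<exists>h. \<forall>x. f m x = h (x $ m)) \<and>
           (\<exists>h. \<forall>x. f a x = h (x $ a) (x $ b)) \<and>
           (\<exists>h. \<forall>x. f b x = h (x $ a) (x $ b))"
proof -
  have "card {a, b, m} = CARD(3)"
    using distinct by simp
  then have "{a, b, m} = UNIV"
    by (intro card_eq_UNIV_imp_eq_UNIV) simp_all
  then have all_coordinates: "(\<forall>k. P k) \<longleftrightarrow> P a \<and> P b \<and> P m" for P
    by (metis UNIV_I empty_iff insert_iff)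
  note axis_invariant = pd_eq_0_iff_axis_invariant[OF differentiable, symmetric]
  have "(\<exists>h. \<forall>x. f m x = h (x $ m)) \<longleftrightarrow> (\<forall>x. pd a (f m) x = 0) \<and> (\<forall>x. pd b (f m) x = 0)"
    unfolding depends_only_on_coordinate_iff axis_invariant
    by (simp add: all_coordinates distinct distinct[symmetric])
  moreover have "(\<exists>h. \<forall>x. f i x = h (x $ a) (x $ b)) \<longleftrightarrow> (\<forall>x. pd m (f i) x = 0)" for i
    unfolding depends_only_on_two_coordinates_iff axis_invariant
    by (simp add: all_coordinates distinct distinct[symmetric])
  moreover have "killing (diag_metric f) (frame_field f m) \<longleftrightarrow>
      (\<forall>x. pd m (f a) x = 0 \<and> pd a (f m) x = 0) \<and> (\<forall>x. pd m (f b) x = 0 \<and> pd b (f m) x = 0)"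
    unfolding killing_frame_field_iff[OF assms(1,2)]
    by (simp add: all_coordinates distinct distinct[symmetric])
  ultimately show ?thesis
    by blast
qed

theorem mainTheorem5:
  fixes f :: "3 \<Rightarrow> real^3 \<Rightarrow> real"
  assumes smooth: "\<And>i. smooth3 (f i)"
    and nonvanishing: "\<And>i x. f i x \<noteq> 0"
  shows "(killing (diag_metric f) (frame_field f 2) \<longleftrightarrow>
            (\<exists>h. \<forall>x. f 2 x = h (x $ 2)) \<and>
            (\<exists>h. \<forall>x. f 1 x = h (x $ 1) (x $ 3)) \<and>
            (\<exists>h. \<forall>x. f 3 x = h (x $ 1) (x $ 3)))
       \<and> (killing (diag_metric f) (frame_field f 3) \<longleftrightarrow>
            (\<exists>h. \<forall>x. f 3 x = h (x $ 3)) \<and>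
            (\<exists>h. \<forall>x. f 1 x = h (x $ 1) (x $ 2)) \<and>
            (\<exists>h. \<forall>x. f 2 x = h (x $ 1) (x $ 2)))"
proof -
  have differentiable: "f i differentiable (at y)" for i y
    using smooth[of i] iter_pd.simps(1)[of "f i"] unfolding smooth3_def by metis
  show ?thesis
    using killing_frame_field_iff_coordinate_dependence[OF differentiable nonvanishing, of 1 3 2]
      killing_frame_field_iff_coordinate_dependence[OF differentiable nonvanishing, of 1 2 3]
    by simp
qed

end
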